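(* Let $S$ be a finite non-empty set and $\Sigma\subseteq\mathbb{R}_+\times S$ locally finite, and let $(X_n,\eta_n)$ be a time-homogeneous irreducible Markov chain on $\Sigma$ such that every line $\Lambda_k=\{x:(x,k)\in\Sigma\}$ is unbounded. Suppose that for some $p>2$ there is $C_p<\infty$ with $\mathbb{E}_{x,i}[|X_{n+1}-X_n|^p]\le C_p$ for all $(x,i)\in\Sigma$, and assume conditions (Q$_G$) and (D$_G$). Let $(a_i)_{i\in S}$ with $a_i\ge0$ for all $i$ be a solution of $d_i+\sum_{j\in S}(a_j-a_i)q_{ij}=0$ for all $i\in S$. Let $\widetilde X_n:=X_n+a_{\eta_n}$ and define $\widetilde\mu_i(y)=\mathbb{E}[\widetilde X_{n+1}-\widetilde X_n\mid\widetilde X_n=y,\eta_n=i]$, $\widetilde\sigma_i^2(y)=\mathbb{E}[(\widetilde X_{n+1}-\widetilde X_n)^2\mid\widetilde X_n=y,\eta_n=i]$. Either (i) set $\delta_4=0$; or (ii) suppose in addition that (Q$_G^+$) and (D$_G^+$) hold and set $\delta_4=\delta_2\wedge\delta_3\in(0,1)$. For $i\in S$ define \[c_i:=e_i+\sum_{j\in S}a_j\gamma_{ij},\qquad s_i^2:=t_i^2+2\sum_{j\in S}a_jd_{ij}+\sum_{j\in S}(a_j^2-a_i^2)q_{ij}.\] Then, as $x\to\infty$, $\widetilde\mu_i(x)=\frac{c_i}x+o(x^{-1-\delta_4})$ and $\widetilde\sigma_i^2(x)=s_i^2+o(x^{-\delta_4})$.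
   Context: Locally finite means $\Sigma\cap([0,r]\times S)$ is finite for every $r\ge0$. Write $\mathbb{E}_{x,i}[\cdot]=\mathbb{E}[\cdot\mid X_n=x,\eta_n=i]$, $q_{ij}(x)=\Pr[\eta_{n+1}=j\mid X_n=x,\eta_n=i]$, $\mu_i(x)=\mathbb{E}_{x,i}[X_{n+1}-X_n]$, $\sigma_i^2(x)=\mathbb{E}_{x,i}[(X_{n+1}-X_n)^2]$, $\mu_{ij}(x)=\mathbb{E}_{x,i}[(X_{n+1}-X_n)\mathbf 1\{\eta_{n+1}=j\}]$. (Q$_G$): there are $\gamma_{ij}\in\mathbb{R}$ with $q_{ij}(x)=q_{ij}+\gamma_{ij}/x+o(x^{-1})$ as $x\to\infty$, where $(q_{ij})$ is an irreducible stochastic matrix with stationary distribution $\pi$. (D$_G$): there are $d_i,e_i,d_{ij}\in\mathbb{R}$ and $t_i^2\ge0$ with at least one $t_i^2\ne0$, such that as $x\to\infty$: $\mu_i(x)=d_i+e_i/x+o(x^{-1})$, $\sigma_i^2(x)=t_i^2+o(1)$, $\mu_{ij}(x)=d_{ij}+o(1)$ for all $i,j$, and $\sum_i\pi_id_i=0$. (Q$_G^+$): there is $\delta_3\in(0,1)$ with $q_{ij}(x)=q_{ij}+\gamma_{ij}/x+o(x^{-1-\delta_3})$. (D$_G^+$): there is $\delta_2\in(0,1)$ with $\mu_i(x)=d_i+e_i/x+o(x^{-1-\delta_2})$, $\sigma_i^2(x)=t_i^2+o(x^{-\delta_2})$, $\mu_{ij}(x)=d_{ij}+o(x^{-\delta_2})$.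 *)

theory Defs
  imports "HOL-Probability.Probability" "HOL-Library.Landau_Symbols"
begin

text \<open>A time-homogeneous Markov chain on a countable state space is represented by its
transition kernel K: state (x,i) goes to a random state distributed as K (x,i).
All conditional quantities E_{x,i}[...] are expectations w.r.t. K (x,i).\<close>

definition locally_finite :: "(real \<times> 's) set \<Rightarrow> bool" where
  "locally_finite \<Sigma> \<longleftrightarrow> (\<forall>r\<ge>0. finite (\<Sigma> \<inter> ({0..r} \<times> UNIV)))"

definition line :: "(real \<times> 's) set \<Rightarrow> 's \<Rightarrow> real set" where
  "line \<Sigma> k = {x. (x, k) \<in> \<Sigma>}"

definition chain_irreducible :: "(real \<times> 's) set \<Rightarrow> (real \<times> 's \<Rightarrow> (real \<times> 's) pmf) \<Rightarrow> bool" where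
  "chain_irreducible \<Sigma> K \<longleftrightarrow>
     (\<forall>z\<in>\<Sigma>. \<forall>w\<in>\<Sigma>. (z, w) \<in> {(u, v). u \<in> \<Sigma> \<and> pmf (K u) v > 0}\<^sup>*)"

definition along :: "real set \<Rightarrow> real filter" where
  "along A = inf at_top (principal A)"

definition qx :: "(real \<times> 's \<Rightarrow> (real \<times> 's) pmf) \<Rightarrow> 's \<Rightarrow> 's \<Rightarrow> real \<Rightarrow> real" where
  "qx K i j x = measure_pmf.prob (K (x, i)) {w. snd w = j}"

definition mux :: "(real \<times> 's \<Rightarrow> (real \<times> 's) pmf) \<Rightarrow> 's \<Rightarrow> real \<Rightarrow> real" where
  "mux K i x = measure_pmf.expectation (K (x, i)) (\<lambda>w. fst w - x)"

definition sigma2x :: "(real \<times> 's \<Rightarrow> (real \<times> 's) pmf) \<Rightarrow> 's \<Rightarrow> real \<Rightarrow> real" where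
  "sigma2x K i x = measure_pmf.expectation (K (x, i)) (\<lambda>w. (fst w - x)\<^sup>2)"

definition muijx :: "(real \<times> 's \<Rightarrow> (real \<times> 's) pmf) \<Rightarrow> 's \<Rightarrow> 's \<Rightarrow> real \<Rightarrow> real" where
  "muijx K i j x = measure_pmf.expectation (K (x, i))
      (\<lambda>w. (fst w - x) * (if snd w = j then 1 else 0))"

text \<open>Tilde quantities: given \<tilde>X_n = y and \<eta>_n = i we have X_n = y - a_i.\<close>
definition mut :: "(real \<times> 's \<Rightarrow> (real \<times> 's) pmf) \<Rightarrow> ('s \<Rightarrow> real) \<Rightarrow> 's \<Rightarrow> real \<Rightarrow> real" where
  "mut K a i y = measure_pmf.expectation (K (y - a i, i)) (\<lambda>w. (fst w + a (snd w)) - y)"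

definition sigma2t :: "(real \<times> 's \<Rightarrow> (real \<times> 's) pmf) \<Rightarrow> ('s \<Rightarrow> real) \<Rightarrow> 's \<Rightarrow> real \<Rightarrow> real" where
  "sigma2t K a i y = measure_pmf.expectation (K (y - a i, i)) (\<lambda>w. ((fst w + a (snd w)) - y)\<^sup>2)"

end

theory Submission
  imports Defs "HOL-Real_Asymp.Real_Asymp"
begin

text \<open>
  Given \<open>\<eta>\<^sub>n = i\<close> and \<open>X\<^sub>n = x\<close>, the increment of \<open>X\<^sub>n + a\<^bsub>\<eta>\<^sub>n\<^esub>\<close> is
  \<open>(X\<^sub>n\<^sub>+\<^sub>1 - x) + a\<^bsub>\<eta>\<^sub>n\<^sub>+\<^sub>1\<^esub> - a\<^sub>i\<close>, so its first two conditional moments are finite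
  linear combinations of \<open>\<mu>\<^sub>i(x)\<close>, \<open>\<sigma>\<^sub>i\<^sup>2(x)\<close>, \<open>\<mu>\<^sub>i\<^sub>j(x)\<close> and \<open>q\<^sub>i\<^sub>j(x)\<close>.
  Inserting the expansions (Q_G) and (D_G), the constant term of the drift is
  \<open>d\<^sub>i + \<Sum>\<^sub>j (a\<^sub>j - a\<^sub>i) q\<^sub>i\<^sub>j = 0\<close> by the choice of \<open>a\<close>, which leaves \<open>c\<^sub>i/x\<close>; the same
  identity rearranges the constant term of the second moment into \<open>s\<^sub>i\<^sup>2\<close>. Changing the
  variable from \<open>x\<close> to \<open>y = x + a\<^sub>i\<close> only adds \<open>c\<^sub>i/x - c\<^sub>i/y = O(y\<^sup>-\<^sup>2)\<close>.
  Apart from the moment bound (which makes all moments integrable), (Q_G), (D_G), their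
  strengthenings and the equation for \<open>a\<close>, none of the hypotheses is needed.
\<close>

lemma integrable_of_moment_bound:
  fixes N :: "'a pmf" and f :: "'a \<Rightarrow> real"
  assumes moment: "(\<integral>\<^sup>+ w. ennreal (\<bar>f w\<bar> powr p) \<partial>N) \<le> ennreal C" and "p \<ge> 2"
  shows "integrable N f" "integrable N (\<lambda>w. (f w)\<^sup>2)"
proof -
  have bound: "\<bar>z\<bar> \<le> 1 + \<bar>z\<bar> powr p \<and> z\<^sup>2 \<le> 1 + \<bar>z\<bar> powr p" for z :: real
  proof (cases "\<bar>z\<bar> \<le> 1")
    case True
    then show ?thesis by (simp add: abs_square_le_1 add_increasing2)
  next
    case False
    then have "\<bar>z\<bar> * 1 \<le> \<bar>z\<bar> * \<bar>z\<bar>" by (intro mult_left_mono) auto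
    moreover have "\<bar>z\<bar> powr 2 \<le> \<bar>z\<bar> powr p"
      using False \<open>p \<ge> 2\<close> by (intro powr_mono) auto
    ultimately show ?thesis using False by (simp add: powr_numeral power2_eq_square)
  qed
  have "integrable N (\<lambda>w. \<bar>f w\<bar> powr p)"
    using moment by (intro integrableI_nonneg) (auto simp: le_less_trans)
  then have dom: "integrable N (\<lambda>w. 1 + \<bar>f w\<bar> powr p)" by simp
  show "integrable N f" "integrable N (\<lambda>w. (f w)\<^sup>2)"
    using bound by (auto intro!: Bochner_Integration.integrable_bound[OF dom])
qed

lemma integrable_fun_snd:
  fixes N :: "('a \<times> 's::finite) pmf" and g :: "'s \<Rightarrow> real"
  shows "integrable N (\<lambda>w. g (snd w))"
  by (rule measure_pmf.integrable_const_bound[where B = "\<Sum>j\<in>UNIV. \<bar>g j\<bar>"])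
     (use member_le_sum[of _ UNIV "\<lambda>j. \<bar>g j\<bar>"] in auto)

lemma expectation_mult_fun_snd:
  fixes N :: "('a \<times> 's::finite) pmf" and Z :: "'a \<times> 's \<Rightarrow> real"
  assumes "integrable N Z"
  shows "measure_pmf.expectation N (\<lambda>w. Z w * g (snd w))
       = (\<Sum>j\<in>UNIV. g j * measure_pmf.expectation N (\<lambda>w. Z w * (if snd w = j then 1 else 0)))"
proof -
  have "(\<lambda>w. Z w * g (snd w)) = (\<lambda>w. \<Sum>j\<in>UNIV. g j * (Z w * (if snd w = j then 1 else 0)))"
    by (simp add: if_distrib mult.commute cong: if_cong)
  moreover have "integrable N (\<lambda>w. Z w * (if snd w = j then 1 else 0))" for j
    using assms by (rule Bochner_Integration.integrable_bound) auto
  ultimately show ?thesis by simp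
qed

lemma expectation_fun_snd:
  fixes N :: "('a \<times> 's::finite) pmf"
  shows "measure_pmf.expectation N (\<lambda>w. g (snd w))
       = (\<Sum>j\<in>UNIV. g j * measure_pmf.prob N {w. snd w = j})"
proof -
  have prob: "measure_pmf.expectation N (\<lambda>w. if snd w = j then 1 else 0 :: real)
      = measure_pmf.prob N {w. snd w = j}" for j
  proof -
    have "measure_pmf.expectation N (\<lambda>w. if snd w = j then 1 else 0 :: real)
        = measure_pmf.expectation N (indicator {w. snd w = j})"
      by (rule Bochner_Integration.integral_cong) (auto simp: indicator_def)
    then show ?thesis by simp
  qed
  show ?thesis
    using expectation_mult_fun_snd[of N "\<lambda>_. 1" g]
    by (simp only: mult_1 prob measure_pmf.integrable_const)
qed

lemma mut_eq_moments:
  fixes K :: "real \<times> 's::finite \<Rightarrow> (real \<times> 's) pmf"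
  assumes "integrable (K (x, i)) (\<lambda>w. fst w - x)"
  shows "mut K a i (x + a i) = mux K i x + (\<Sum>j\<in>UNIV. a j * qx K i j x) - a i"
proof -
  have "mut K a i (x + a i) = measure_pmf.expectation (K (x, i)) (\<lambda>w. (fst w - x) + a (snd w) - a i)"
    unfolding mut_def by (simp add: algebra_simps)
  also have "\<dots> = mux K i x + measure_pmf.expectation (K (x, i)) (\<lambda>w. a (snd w)) - a i"
    using assms integrable_fun_snd[of "K (x, i)" a]
    by (simp add: mux_def Bochner_Integration.integral_add Bochner_Integration.integral_diff)
  finally show ?thesis by (simp add: expectation_fun_snd qx_def)
qed

lemma sigma2t_eq_moments:
  fixes K :: "real \<times> 's::finite \<Rightarrow> (real \<times> 's) pmf"
  assumes int1: "integrable (K (x, i)) (\<lambda>w. fst w - x)"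
    and int2: "integrable (K (x, i)) (\<lambda>w. (fst w - x)\<^sup>2)"
  shows "sigma2t K a i (x + a i) = sigma2x K i x + 2 * (\<Sum>j\<in>UNIV. a j * muijx K i j x)
           - 2 * a i * mux K i x + (\<Sum>j\<in>UNIV. (a j - a i)\<^sup>2 * qx K i j x)"
proof -
  let ?E = "measure_pmf.expectation (K (x, i))"
  have "integrable (K (x, i)) (\<lambda>w. (fst w - x) * (\<Sum>j\<in>UNIV. \<bar>a j\<bar>))"
    using int1 by simp
  then have int3: "integrable (K (x, i)) (\<lambda>w. (fst w - x) * a (snd w))"
    by (rule Bochner_Integration.integrable_bound)
      (use member_le_sum[of _ UNIV "\<lambda>j. \<bar>a j\<bar>"] in \<open>auto simp: abs_mult intro!: mult_left_mono\<close>)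
  have "sigma2t K a i (x + a i) = ?E (\<lambda>w. (fst w - x)\<^sup>2 + 2 * ((fst w - x) * a (snd w))
           - 2 * a i * (fst w - x) + (a (snd w) - a i)\<^sup>2)"
    unfolding sigma2t_def by (simp add: power2_eq_square algebra_simps)
  also have "\<dots> = sigma2x K i x + 2 * ?E (\<lambda>w. (fst w - x) * a (snd w))
           - 2 * a i * mux K i x + ?E (\<lambda>w. (a (snd w) - a i)\<^sup>2)"
    using int1 int2 int3 integrable_fun_snd[of "K (x, i)" "\<lambda>s. (a s - a i)\<^sup>2"]
    by (simp add: sigma2x_def mux_def Bochner_Integration.integral_add Bochner_Integration.integral_diff)
  finally show ?thesis
    using expectation_mult_fun_snd[OF int1, of a]
    by (simp add: expectation_fun_snd[where g = "\<lambda>j. (a j - a i)\<^sup>2"] muijx_def qx_def)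
qed

lemma along_le_at_top: "along L \<le> at_top"
  unfolding along_def by simp

lemma eventually_along_mem: "eventually (\<lambda>x. x \<in> L) (along L)"
  unfolding along_def eventually_inf_principal by simp

lemma eventually_along_gt: "eventually (\<lambda>x. x > c) (along L)"
  by (rule filter_leD[OF along_le_at_top]) (rule eventually_gt_at_top)

lemma smallo_along_powr_mono:
  assumes "f \<in> o[along L](\<lambda>x. x powr r)" "r \<le> s"
  shows "f \<in> o[along L](\<lambda>x. x powr s)"
proof -
  have "(\<lambda>x::real. x powr r) \<in> O[at_top](\<lambda>x. x powr s)"
    using powr_bigo_iff[of "\<lambda>x. x" at_top r s] assms(2) by (simp add: filterlim_ident)
  then show ?thesis
    using landau_o.small_big_trans[OF assms(1) landau_o.big.filter_mono[OF along_le_at_top]] by blast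
qed

lemma smallo_along_inverse_eq_powr: "o[along L](\<lambda>x. 1 / x) = o[along L](\<lambda>x. x powr -1)"
  using eventually_along_gt[of 0 L]
  by (intro landau_o.small.cong) (auto elim!: eventually_mono simp: powr_minus_divide)

lemma tendsto_imp_smallo_powr_zero:
  assumes "(f \<longlongrightarrow> l) (along L)"
  shows "(\<lambda>x. f x - l) \<in> o[along L](\<lambda>x. x powr 0)"
proof -
  have "(\<lambda>x. f x - l) \<in> o[along L](\<lambda>x. 1)"
    by (rule smalloI_tendsto) (use assms in \<open>auto intro!: tendsto_eq_intros\<close>)
  moreover have "o[along L](\<lambda>x. 1) = o[along L](\<lambda>x. x powr 0)"
    using eventually_along_gt[of 0 L] by (intro landau_o.small.cong) (auto elim!: eventually_mono)
  ultimately show ?thesis by simp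
qed

lemma const_div_smallo_powr:
  assumes "\<delta> < 1"
  shows "(\<lambda>x. c / x) \<in> o[along L](\<lambda>x. x powr - \<delta>)"
proof -
  have "(\<lambda>x::real. x powr -1) \<in> o[at_top](\<lambda>x. x powr - \<delta>)"
    using powr_smallo_iff[of "\<lambda>x. x" at_top "-1" "-\<delta>"] assms by (simp add: filterlim_ident)
  then have inverse: "(\<lambda>x. x powr -1) \<in> o[along L](\<lambda>x. x powr - \<delta>)"
    by (rule landau_o.small.filter_mono[OF along_le_at_top])
  have "eventually (\<lambda>x. x powr -1 = 1 / x) (along L)"
    using eventually_along_gt[of 0 L] by eventually_elim (simp add: powr_minus_divide)
  from inverse[unfolded landau_o.small.in_cong[OF this]]
  have "(\<lambda>x. 1 / x) \<in> o[along L](\<lambda>x. x powr - \<delta>)" .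
  then have "(\<lambda>x. c * (1 / x)) \<in> o[along L](\<lambda>x. x powr - \<delta>)"
    using cmult_in_smallo_iff[where c = c and f = "\<lambda>x. 1 / x"] by blast
  then show ?thesis by (simp only: times_divide_eq_right mult_1_right)
qed

lemma smallo_of_first_order_expansion:
  assumes "(\<lambda>x. f x - l - c / x) \<in> o[along L](\<lambda>x. x powr (-1 - \<delta>))" "\<delta> < 1"
  shows "(\<lambda>x. f x - l) \<in> o[along L](\<lambda>x. x powr - \<delta>)"
proof -
  have "(\<lambda>x. (f x - l - c / x) + c / x) \<in> o[along L](\<lambda>x. x powr - \<delta>)"
    by (intro sum_in_smallo smallo_along_powr_mono[OF assms(1)] const_div_smallo_powr assms(2)) simp
  then show ?thesis by simp
qed

lemma smallo_along_shift:
  assumes "f \<in> o[along L](\<lambda>x. x powr r)"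
  shows "(\<lambda>y. f (y - c)) \<in> o[along {y. y - c \<in> L}](\<lambda>y. y powr r)"
proof -
  have "filterlim (\<lambda>y::real. y - c) at_top at_top" by real_asymp
  then have "filterlim (\<lambda>y. y - c) (along L) (along {y. y - c \<in> L})"
    unfolding along_def filterlim_inf filterlim_principal eventually_inf_principal
    by (auto intro: filterlim_mono)
  then have "(\<lambda>y. f (y - c)) \<in> o[along {y. y - c \<in> L}](\<lambda>y. (y - c) powr r)"
    by (rule landau_o.small.compose[OF assms])
  moreover have "(\<lambda>y::real. (y - c) powr r) \<in> O[at_top](\<lambda>y. y powr r)"
  proof -
    have "(\<lambda>y::real. y - c) \<sim>[at_top] (\<lambda>y. y)" by real_asymp
    then have "(\<lambda>y::real. (y - c) powr r) \<sim>[at_top] (\<lambda>y. y powr r)"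
      by (rule asymp_equiv_powr_real) (auto intro: eventually_ge_at_top)
    then show ?thesis by (intro bigthetaD1 asymp_equiv_imp_bigtheta)
  qed
  ultimately show ?thesis
    using landau_o.small_big_trans landau_o.big.filter_mono[OF along_le_at_top] by blast
qed

lemma shifted_inverse_diff_smallo:
  assumes "\<delta> < 1"
  shows "(\<lambda>y::real. c / (y - b) - c / y) \<in> o[at_top](\<lambda>y. y powr (-1 - \<delta>))"
proof -
  have "(\<lambda>y::real. 1 / (y * (y - b))) \<in> O[at_top](\<lambda>y. y powr -2)" by real_asymp
  moreover have "(\<lambda>y::real. y powr -2) \<in> o[at_top](\<lambda>y. y powr (-1 - \<delta>))"
    using powr_smallo_iff[of "\<lambda>x. x" at_top "-2" "-1 - \<delta>"] assms by (simp add: filterlim_ident)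
  ultimately have "(\<lambda>y::real. 1 / (y * (y - b))) \<in> o[at_top](\<lambda>y. y powr (-1 - \<delta>))"
    by (rule landau_o.big_small_trans)
  then have "(\<lambda>y. c * b * (1 / (y * (y - b)))) \<in> o[at_top](\<lambda>y. y powr (-1 - \<delta>))"
    using cmult_in_smallo_iff[where c = "c * b" and f = "\<lambda>y. 1 / (y * (y - b))"] by blast
  moreover have "eventually (\<lambda>y. c * b * (1 / (y * (y - b))) = c / (y - b) - c / y) at_top"
    using eventually_gt_at_top[of "max 0 b"] by eventually_elim (auto simp: field_simps)
  ultimately show ?thesis by (simp add: landau_o.small.in_cong)
qed

lemma tilde_drift_asymptotics:
  fixes K :: "real \<times> 's::finite \<Rightarrow> (real \<times> 's) pmf"
  assumes integrable: "\<And>x. x \<in> L \<Longrightarrow> integrable (K (x, i)) (\<lambda>w. fst w - x)"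
    and "\<delta> < 1"
    and drift: "(\<lambda>x. mux K i x - d - e / x) \<in> o[along L](\<lambda>x. x powr (-1 - \<delta>))"
    and jump: "\<And>j. (\<lambda>x. qx K i j x - q j - \<gamma> j / x) \<in> o[along L](\<lambda>x. x powr (-1 - \<delta>))"
    and stochastic: "(\<Sum>j\<in>UNIV. q j) = 1"
    and balance: "d + (\<Sum>j\<in>UNIV. (a j - a i) * q j) = 0"
  shows "(\<lambda>y. mut K a i y - (e + (\<Sum>j\<in>UNIV. a j * \<gamma> j)) / y)
           \<in> o[along {y. y - a i \<in> L}](\<lambda>y. y powr (-1 - \<delta>))"
proof -
  define c where "c = e + (\<Sum>j\<in>UNIV. a j * \<gamma> j)"
  define R where
    "R x = (mux K i x - d - e / x) + (\<Sum>j\<in>UNIV. a j * (qx K i j x - q j - \<gamma> j / x))" for x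
  have "R \<in> o[along L](\<lambda>x. x powr (-1 - \<delta>))"
    unfolding R_def by (rule sum_in_smallo(1)[OF drift big_sum_in_smallo]) (simp add: jump)
  then have shifted: "(\<lambda>y. R (y - a i) + (c / (y - a i) - c / y))
      \<in> o[along {y. y - a i \<in> L}](\<lambda>y. y powr (-1 - \<delta>))"
    by (intro sum_in_smallo smallo_along_shift
        landau_o.small.filter_mono[OF along_le_at_top shifted_inverse_diff_smallo] \<open>\<delta> < 1\<close>)
  have "eventually (\<lambda>y. R (y - a i) + (c / (y - a i) - c / y) = mut K a i y - c / y)
      (along {y. y - a i \<in> L})"
    using eventually_along_mem
  proof eventually_elim
    case (elim y)
    have "d + (\<Sum>j\<in>UNIV. a j * q j) = a i"
      using balance stochastic by (simp add: algebra_simps sum_subtractf sum_distrib_left[symmetric])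
    then have "R x = mux K i x + (\<Sum>j\<in>UNIV. a j * qx K i j x) - a i - c / x" for x
      unfolding R_def c_def
      by (simp add: algebra_simps sum_subtractf sum.distrib sum_divide_distrib add_divide_distrib)
    moreover from elim have "y - a i \<in> L" by simp
    then have "mut K a i y = mux K i (y - a i) + (\<Sum>j\<in>UNIV. a j * qx K i j (y - a i)) - a i"
      using mut_eq_moments[where K = K and x = "y - a i" and i = i and a = a] integrable by simp
    ultimately show ?case by simp
  qed
  from shifted[unfolded landau_o.small.in_cong[OF this]] show ?thesis unfolding c_def .
qed

lemma tilde_variance_asymptotics:
  fixes K :: "real \<times> 's::finite \<Rightarrow> (real \<times> 's) pmf"
  assumes integrable: "\<And>x. x \<in> L \<Longrightarrow> integrable (K (x, i)) (\<lambda>w. fst w - x)"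
      "\<And>x. x \<in> L \<Longrightarrow> integrable (K (x, i)) (\<lambda>w. (fst w - x)\<^sup>2)"
    and variance: "(\<lambda>x. sigma2x K i x - t2) \<in> o[along L](\<lambda>x. x powr - \<delta>)"
    and cross: "\<And>j. (\<lambda>x. muijx K i j x - dd j) \<in> o[along L](\<lambda>x. x powr - \<delta>)"
    and "\<delta> < 1"
    and drift: "(\<lambda>x. mux K i x - d - e / x) \<in> o[along L](\<lambda>x. x powr (-1 - \<delta>))"
    and jump: "\<And>j. (\<lambda>x. qx K i j x - q j - \<gamma> j / x) \<in> o[along L](\<lambda>x. x powr (-1 - \<delta>))"
    and balance: "d + (\<Sum>j\<in>UNIV. (a j - a i) * q j) = 0"
  shows "(\<lambda>y. sigma2t K a i y
            - (t2 + 2 * (\<Sum>j\<in>UNIV. a j * dd j) + (\<Sum>j\<in>UNIV. ((a j)\<^sup>2 - (a i)\<^sup>2) * q j)))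
           \<in> o[along {y. y - a i \<in> L}](\<lambda>y. y powr - \<delta>)"
proof -
  define s where "s = t2 + 2 * (\<Sum>j\<in>UNIV. a j * dd j) + (\<Sum>j\<in>UNIV. ((a j)\<^sup>2 - (a i)\<^sup>2) * q j)"
  have s_eq: "s = t2 + 2 * (\<Sum>j\<in>UNIV. a j * dd j) - 2 * a i * d + (\<Sum>j\<in>UNIV. (a j - a i)\<^sup>2 * q j)"
  proof -
    have "(\<Sum>j\<in>UNIV. ((a j)\<^sup>2 - (a i)\<^sup>2) * q j)
        = (\<Sum>j\<in>UNIV. (a j - a i)\<^sup>2 * q j + 2 * a i * ((a j - a i) * q j))"
      by (rule sum.cong) (auto simp: power2_eq_square algebra_simps)
    also have "\<dots> = (\<Sum>j\<in>UNIV. (a j - a i)\<^sup>2 * q j) + 2 * a i * (\<Sum>j\<in>UNIV. (a j - a i) * q j)"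
      by (simp add: sum.distrib sum_distrib_left)
    finally show ?thesis
      using arg_cong[OF balance, of "\<lambda>u. 2 * a i * u"] unfolding s_def by (simp add: algebra_simps)
  qed
  have drift': "(\<lambda>x. mux K i x - d) \<in> o[along L](\<lambda>x. x powr - \<delta>)"
    using drift \<open>\<delta> < 1\<close> by (rule smallo_of_first_order_expansion)
  have jump': "(\<lambda>x. qx K i j x - q j) \<in> o[along L](\<lambda>x. x powr - \<delta>)" for j
    using jump \<open>\<delta> < 1\<close> by (rule smallo_of_first_order_expansion)
  define R where "R x = (sigma2x K i x - t2) + 2 * (\<Sum>j\<in>UNIV. a j * (muijx K i j x - dd j))
      - 2 * a i * (mux K i x - d) + (\<Sum>j\<in>UNIV. (a j - a i)\<^sup>2 * (qx K i j x - q j))" for x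
  have "R \<in> o[along L](\<lambda>x. x powr - \<delta>)"
    unfolding R_def
    by (rule sum_in_smallo(1)[OF sum_in_smallo(2)[OF sum_in_smallo(1)[OF variance]]];
        simp add: big_sum_in_smallo cross drift' jump')
  then have shifted: "(\<lambda>y. R (y - a i)) \<in> o[along {y. y - a i \<in> L}](\<lambda>y. y powr - \<delta>)"
    by (rule smallo_along_shift)
  have "eventually (\<lambda>y. R (y - a i) = sigma2t K a i y - s) (along {y. y - a i \<in> L})"
    using eventually_along_mem
  proof eventually_elim
    case (elim y)
    then have "y - a i \<in> L" by simp
    then have "sigma2t K a i y = sigma2x K i (y - a i)
        + 2 * (\<Sum>j\<in>UNIV. a j * muijx K i j (y - a i)) - 2 * a i * mux K i (y - a i) + (\<Sum>j\<in>UNIV. (a j - a i)\<^sup>2 * qx K i j (y - a i))"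
      using sigma2t_eq_moments[where K = K and x = "y - a i" and i = i and a = a] integrable by simp
    then show ?case unfolding R_def s_eq by (simp add: algebra_simps sum_subtractf)
  qed
  from shifted[unfolded landau_o.small.in_cong[OF this]] show ?thesis unfolding s_def .
qed

theorem lemma5p1:
  fixes \<Sigma> :: "(real \<times> 's::finite) set"
    and K :: "real \<times> 's \<Rightarrow> (real \<times> 's) pmf"
    and p Cp :: real
    and qbar \<gamma> :: "'s \<Rightarrow> 's \<Rightarrow> real" and \<pi> :: "'s \<Rightarrow> real"
    and d e t2 :: "'s \<Rightarrow> real" and dd :: "'s \<Rightarrow> 's \<Rightarrow> real"
    and a :: "'s \<Rightarrow> real" and \<delta>4 :: real
  assumes Sigma_pos: "\<forall>(x, i)\<in>\<Sigma>. x \<ge> 0"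
    and Sigma_lf: "locally_finite \<Sigma>"
    and K_Sigma: "\<forall>z\<in>\<Sigma>. set_pmf (K z) \<subseteq> \<Sigma>"
    and irred: "chain_irreducible \<Sigma> K"
    and unbounded: "\<forall>k. \<not> bdd_above (line \<Sigma> k)"
    and p_gt: "p > 2"
    and moment: "\<forall>(x, i)\<in>\<Sigma>. (\<integral>\<^sup>+ w. ennreal (\<bar>fst w - x\<bar> powr p) \<partial>(K (x, i))) \<le> ennreal Cp"
    \<comment> \<open>(Q_G)\<close>
    and qbar_stoch: "\<forall>i j. qbar i j \<ge> 0" "\<forall>i. (\<Sum>j\<in>UNIV. qbar i j) = 1"
    and qbar_irred: "\<forall>i j. (i, j) \<in> {(k, l). qbar k l > 0}\<^sup>*"
    and \<pi>_stat: "\<forall>i. \<pi> i \<ge> 0" "(\<Sum>i\<in>UNIV. \<pi> i) = 1" "\<forall>j. (\<Sum>i\<in>UNIV. \<pi> i * qbar i j) = \<pi> j"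
    and QG: "\<forall>i j. (\<lambda>x. qx K i j x - qbar i j - \<gamma> i j / x) \<in> o[along (line \<Sigma> i)](\<lambda>x. 1 / x)"
    \<comment> \<open>(D_G)\<close>
    and DG_mu: "\<forall>i. (\<lambda>x. mux K i x - d i - e i / x) \<in> o[along (line \<Sigma> i)](\<lambda>x. 1 / x)"
    and DG_sigma: "\<forall>i. ((\<lambda>x. sigma2x K i x) \<longlongrightarrow> t2 i) (along (line \<Sigma> i))"
    and DG_muij: "\<forall>i j. ((\<lambda>x. muijx K i j x) \<longlongrightarrow> dd i j) (along (line \<Sigma> i))"
    and t2_nonneg: "\<forall>i. t2 i \<ge> 0"
    and t2_nz: "\<exists>i. t2 i \<noteq> 0"
    and drift_zero: "(\<Sum>i\<in>UNIV. \<pi> i * d i) = 0"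
    \<comment> \<open>the vector a\<close>
    and a_nonneg: "\<forall>i. a i \<ge> 0"
    and a_eq: "\<forall>i. d i + (\<Sum>j\<in>UNIV. (a j - a i) * qbar i j) = 0"
    \<comment> \<open>case (i) or case (ii)\<close>
    and cases: "\<delta>4 = 0 \<or>
      (\<exists>\<delta>2 \<delta>3. 0 < \<delta>2 \<and> \<delta>2 < 1 \<and> 0 < \<delta>3 \<and> \<delta>3 < 1 \<and> \<delta>4 = min \<delta>2 \<delta>3 \<and>
        (\<forall>i j. (\<lambda>x. qx K i j x - qbar i j - \<gamma> i j / x)
                 \<in> o[along (line \<Sigma> i)](\<lambda>x. x powr (-1 - \<delta>3))) \<and>
        (\<forall>i. (\<lambda>x. mux K i x - d i - e i / x)
                 \<in> o[along (line \<Sigma> i)](\<lambda>x. x powr (-1 - \<delta>2))) \<and>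
        (\<forall>i. (\<lambda>x. sigma2x K i x - t2 i) \<in> o[along (line \<Sigma> i)](\<lambda>x. x powr (- \<delta>2))) \<and>
        (\<forall>i j. (\<lambda>x. muijx K i j x - dd i j) \<in> o[along (line \<Sigma> i)](\<lambda>x. x powr (- \<delta>2))))"
  shows "\<forall>i. (\<lambda>y. mut K a i y - (e i + (\<Sum>j\<in>UNIV. a j * \<gamma> i j)) / y)
                \<in> o[along {y. (y - a i, i) \<in> \<Sigma>}](\<lambda>y. y powr (-1 - \<delta>4))
           \<and> (\<lambda>y. sigma2t K a i y
                   - (t2 i + 2 * (\<Sum>j\<in>UNIV. a j * dd i j) + (\<Sum>j\<in>UNIV. ((a j)\<^sup>2 - (a i)\<^sup>2) * qbar i j)))
                \<in> o[along {y. (y - a i, i) \<in> \<Sigma>}](\<lambda>y. y powr (- \<delta>4))"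
proof -
  have rates: "\<delta>4 < 1
      \<and> (\<forall>j. (\<lambda>x. qx K i j x - qbar i j - \<gamma> i j / x) \<in> o[along (line \<Sigma> i)](\<lambda>x. x powr (-1 - \<delta>4)))
      \<and> (\<lambda>x. mux K i x - d i - e i / x) \<in> o[along (line \<Sigma> i)](\<lambda>x. x powr (-1 - \<delta>4))
      \<and> (\<lambda>x. sigma2x K i x - t2 i) \<in> o[along (line \<Sigma> i)](\<lambda>x. x powr (- \<delta>4))
      \<and> (\<forall>j. (\<lambda>x. muijx K i j x - dd i j) \<in> o[along (line \<Sigma> i)](\<lambda>x. x powr (- \<delta>4)))" for i
    using cases
  proof (elim disjE exE conjE, goal_cases)
    case 1
    then show ?case
      using QG DG_mu DG_sigma[rule_format, THEN tendsto_imp_smallo_powr_zero]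
        DG_muij[rule_format, THEN tendsto_imp_smallo_powr_zero]
      by (simp add: smallo_along_inverse_eq_powr)
  next
    case (2 \<delta>2 \<delta>3)
    then have "\<delta>4 < 1" "-1 - \<delta>3 \<le> -1 - \<delta>4" "-1 - \<delta>2 \<le> -1 - \<delta>4" "- \<delta>2 \<le> - \<delta>4"
      by auto
    with 2 show ?case by (blast intro: smallo_along_powr_mono)
  qed
  have integrable:
      "integrable (K (x, i)) (\<lambda>w. fst w - x)" "integrable (K (x, i)) (\<lambda>w. (fst w - x)\<^sup>2)"
    if "x \<in> line \<Sigma> i" for x i
    using integrable_of_moment_bound[where f = "\<lambda>w. fst w - x" and N = "K (x, i)"] moment p_gt that
    by (auto simp: line_def)
  have shifted_line: "{y. (y - a i, i) \<in> \<Sigma>} = {y. y - a i \<in> line \<Sigma> i}" for i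
    by (simp add: line_def)
  show ?thesis unfolding shifted_line
    using rates integrable qbar_stoch a_eq
    by (auto intro!: tilde_drift_asymptotics tilde_variance_asymptotics)
qed

end
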